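(* For every $\gamma>0$ and every $E>0$ there exists a density operator $\varrho$ with $0<\operatorname{tr}[\varrho H^2]\le E$ such that $$\left\|\widetilde\varrho_{-}-\frac{{\cal N}_{-}(\gamma)[\varrho]}{\operatorname{tr}\big[{\cal N}_{-}(\gamma)[\varrho]\big]}\right\|_1\ \ge\ 1.$$
   Context: ${\cal H}$ is a separable Hilbert space with orthonormal (Fock) basis $\{|n\rangle\}_{n=0}^{\infty}$; $a=\sum_{n\ge1}\sqrt{n}\,|n-1\rangle\langle n|$, $a^{\dagger}=\sum_{n\ge0}\sqrt{n+1}\,|n+1\rangle\langle n|$, $H=a^{\dagger}a$. For a density operator $\varrho$, $\operatorname{tr}[\varrho H^k]=\sum_n n^k\langle n|\varrho|n\rangle$. Ideal photon subtraction output: $\widetilde\varrho_{-}=a\varrho a^{\dagger}/\operatorname{tr}[a\varrho a^{\dagger}]$ (defined when $0<\operatorname{tr}[\varrho H]<\infty$). For $\gamma>0$, the approximate photon subtraction operation is ${\cal N}_{-}(\gamma)[\varrho]=(e^{2\gamma}-1)\,a e^{-\gamma H}\varrho e^{-\gamma H}a^{\dagger}$. $\|X\|_1=\operatorname{tr}\sqrt{X^{\dagger}X}$. *)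

theory Defs
  imports Complex_Main "HOL-Library.Extended_Nonnegative_Real"
begin

text \<open>Operators on the Fock space are represented by their matrix elements in the
Fock basis: X m n = <m|X|n>.\<close>

type_synonym fop = "nat \<Rightarrow> nat \<Rightarrow> complex"

text \<open>Boundedness, tested on finitely supported vectors (which are dense).\<close>
definition bounded_op :: "fop \<Rightarrow> bool" where
  "bounded_op X \<longleftrightarrow> (\<exists>C. \<forall>F M (v::nat \<Rightarrow> complex). finite F \<longrightarrow> finite M \<longrightarrow>
      (\<Sum>m\<in>M. (cmod (\<Sum>n\<in>F. X m n * v n))\<^sup>2) \<le> C * (\<Sum>n\<in>F. (cmod (v n))\<^sup>2))"

definition positive_op :: "fop \<Rightarrow> bool" where
  "positive_op X \<longleftrightarrow> (\<forall>F (v::nat \<Rightarrow> complex). finite F \<longrightarrow>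
      Im (\<Sum>m\<in>F. \<Sum>n\<in>F. cnj (v m) * X m n * v n) = 0 \<and>
      0 \<le> Re (\<Sum>m\<in>F. \<Sum>n\<in>F. cnj (v m) * X m n * v n))"

definition mmult :: "fop \<Rightarrow> fop \<Rightarrow> fop" where
  "mmult A B = (\<lambda>m n. \<Sum>k. A m k * B k n)"

definition adj :: "fop \<Rightarrow> fop" where
  "adj X = (\<lambda>m n. cnj (X n m))"

definition op_scale :: "complex \<Rightarrow> fop \<Rightarrow> fop" where
  "op_scale c X = (\<lambda>m n. c * X m n)"

definition op_diff :: "fop \<Rightarrow> fop \<Rightarrow> fop" where
  "op_diff X Y = (\<lambda>m n. X m n - Y m n)"

definition op_trace :: "fop \<Rightarrow> complex" where
  "op_trace X = (\<Sum>n. X n n)"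

definition ann :: fop where
  "ann = (\<lambda>m n. if n = Suc m then complex_of_real (sqrt (real n)) else 0)"

definition cre :: fop where
  "cre = adj ann"

definition exp_mH :: "real \<Rightarrow> fop" where
  "exp_mH g = (\<lambda>m n. if m = n then complex_of_real (exp (- g * real n)) else 0)"

definition density_op :: "fop \<Rightarrow> bool" where
  "density_op \<rho> \<longleftrightarrow> bounded_op \<rho> \<and> positive_op \<rho> \<and>
     summable (\<lambda>n. Re (\<rho> n n)) \<and> op_trace \<rho> = 1"

definition tr_H_pow :: "fop \<Rightarrow> nat \<Rightarrow> real" where
  "tr_H_pow \<rho> k = (\<Sum>n. real n ^ k * Re (\<rho> n n))"

definition photon_sub :: "fop \<Rightarrow> fop" where
  "photon_sub \<rho> = op_scale (1 / op_trace (mmult (mmult ann \<rho>) cre)) (mmult (mmult ann \<rho>) cre)"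

definition approx_sub :: "real \<Rightarrow> fop \<Rightarrow> fop" where
  "approx_sub g \<rho> = op_scale (complex_of_real (exp (2 * g) - 1))
     (mmult (mmult (mmult (mmult ann (exp_mH g)) \<rho>) (exp_mH g)) cre)"

definition op_sqrt :: "fop \<Rightarrow> fop" where
  "op_sqrt P = (THE S. bounded_op S \<and> positive_op S \<and> mmult S S = P)"

definition trace_norm :: "fop \<Rightarrow> ennreal" where
  "trace_norm X = (\<Sum>n. ennreal (Re (op_sqrt (mmult (adj X) X) n n)))"

end

theory Submission
  imports Defs
begin

text \<open>Both operations map diagonal states to diagonal states, so everything reduces to weights
  on the Fock basis. Put weight \<open>p\<close> on \<open>|1\<rangle>\<close>, weight \<open>3p/(M+1)\<close> on \<open>|M+1\<rangle>\<close> and the rest on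
  \<open>|0\<rangle>\<close>. Ideal subtraction gives \<open>1/4 |0\<rangle>\<langle>0| + 3/4 |M\<rangle>\<langle>M|\<close>, whereas the filter \<open>e\<^sup>-\<^sup>\<gamma>\<^sup>H\<close>
  damps the \<open>|M\<rangle>\<close> component relative to \<open>|0\<rangle>\<close> by \<open>e\<^sup>-\<^sup>2\<^sup>\<gamma>\<^sup>M\<close>; once \<open>9 e\<^sup>-\<^sup>2\<^sup>\<gamma>\<^sup>M \<le> 1\<close> the
  normalised approximate output has weight \<open>y \<ge> 3/4\<close> on \<open>|0\<rangle>\<close>, and the trace distance
  \<open>2 |y - 1/4|\<close> is at least 1. The second moment \<open>p (3M + 4)\<close> is made at most \<open>E\<close> by the choice of \<open>p\<close>.\<close>

definition diag_op :: "(nat \<Rightarrow> real) \<Rightarrow> fop" where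
  "diag_op f = (\<lambda>m n. if m = n then complex_of_real (f n) else 0)"

lemma suminf_single: "(\<Sum>k. if k = n then c else 0) = (c :: 'a :: {comm_monoid_add, t2_space})"
  using sums_single[of n "\<lambda>_. c", THEN sums_unique] by simp

lemma suminf_two_point:
  fixes f :: "nat \<Rightarrow> 'a :: {comm_monoid_add, t2_space}"
  assumes "i \<noteq> j" and "\<And>n. n \<noteq> i \<Longrightarrow> n \<noteq> j \<Longrightarrow> f n = 0"
  shows "(\<Sum>n. f n) = f i + f j"
  using suminf_finite[of "{i, j}" f] assms by auto

subsection \<open>Diagonal operators\<close>

lemma mmult_diag_op_right: "mmult A (diag_op f) = (\<lambda>m n. A m n * complex_of_real (f n))"
proof (intro ext)
  fix m n
  have "(\<lambda>k. A m k * diag_op f k n) = (\<lambda>k. if k = n then A m n * complex_of_real (f n) else 0)"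
    by (auto simp: diag_op_def)
  then show "mmult A (diag_op f) m n = A m n * complex_of_real (f n)"
    unfolding mmult_def by (simp add: suminf_single)
qed

lemma mmult_cre_right: "mmult A cre = (\<lambda>m n. A m (Suc n) * complex_of_real (sqrt (real (Suc n))))"
proof (intro ext)
  fix m n
  have "(\<lambda>k. A m k * cre k n) =
      (\<lambda>k. if k = Suc n then A m (Suc n) * complex_of_real (sqrt (real (Suc n))) else 0)"
    by (auto simp: cre_def adj_def ann_def)
  then show "mmult A cre m n = A m (Suc n) * complex_of_real (sqrt (real (Suc n)))"
    unfolding mmult_def by (simp add: suminf_single)
qed

lemma mmult_diag_op: "mmult (diag_op f) (diag_op g) = diag_op (\<lambda>n. f n * g n)"
  unfolding mmult_diag_op_right by (auto simp: diag_op_def fun_eq_iff)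

lemma adj_diag_op: "adj (diag_op f) = diag_op f"
  by (auto simp: fun_eq_iff adj_def diag_op_def)

lemma op_scale_diag_op: "op_scale (complex_of_real c) (diag_op f) = diag_op (\<lambda>n. c * f n)"
  by (auto simp: fun_eq_iff op_scale_def diag_op_def)

lemma op_diff_diag_op: "op_diff (diag_op f) (diag_op g) = diag_op (\<lambda>n. f n - g n)"
  by (auto simp: fun_eq_iff op_diff_def diag_op_def)

lemma op_trace_diag_op: "summable f \<Longrightarrow> op_trace (diag_op f) = complex_of_real (\<Sum>n. f n)"
  unfolding op_trace_def diag_op_def by (simp add: suminf_of_real)

definition op_normalize :: "fop \<Rightarrow> fop" where
  "op_normalize X = op_scale (1 / op_trace X) X"

lemma op_normalize_diag_op:
  assumes "summable f"
  shows "op_normalize (diag_op f) = diag_op (\<lambda>n. f n / (\<Sum>k. f k))"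
  unfolding op_normalize_def op_trace_diag_op[OF assms]
  by (auto simp: op_scale_def diag_op_def fun_eq_iff)

lemma exp_mH_eq_diag_op: "exp_mH g = diag_op (\<lambda>n. exp (- g * real n))"
  by (simp only: exp_mH_def diag_op_def)

lemma bounded_op_diag_op:
  assumes "\<And>n. \<bar>f n\<bar> \<le> B"
  shows "bounded_op (diag_op f)"
  unfolding bounded_op_def
proof (intro exI allI impI)
  fix F M :: "nat set" and v :: "nat \<Rightarrow> complex"
  assume F: "finite F" and M: "finite M"
  have row: "(\<Sum>n\<in>F. diag_op f m n * v n) = (if m \<in> F then complex_of_real (f m) * v m else 0)" for m
    using F by (simp add: diag_op_def if_distrib[of "\<lambda>x. x * _"] cong: if_cong)
  have bound: "(cmod (complex_of_real (f m) * v m))\<^sup>2 \<le> B\<^sup>2 * (cmod (v m))\<^sup>2" for m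
  proof -
    have "\<bar>f m\<bar>\<^sup>2 \<le> B\<^sup>2" using power_mono[OF assms[of m] abs_ge_zero, of 2] by simp
    then show ?thesis by (simp add: norm_mult power_mult_distrib mult_right_mono)
  qed
  have "(\<Sum>m\<in>M. (cmod (\<Sum>n\<in>F. diag_op f m n * v n))\<^sup>2)
        = (\<Sum>m\<in>M \<inter> F. (cmod (complex_of_real (f m) * v m))\<^sup>2)"
    using M by (simp add: row if_distrib[of "\<lambda>x. (cmod x)\<^sup>2"] sum.inter_restrict cong: if_cong)
  also have "\<dots> \<le> (\<Sum>m\<in>M \<inter> F. B\<^sup>2 * (cmod (v m))\<^sup>2)"
    by (rule sum_mono) (rule bound)
  also have "\<dots> \<le> (\<Sum>m\<in>F. B\<^sup>2 * (cmod (v m))\<^sup>2)"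
    using F by (intro sum_mono2) auto
  finally show "(\<Sum>m\<in>M. (cmod (\<Sum>n\<in>F. diag_op f m n * v n))\<^sup>2) \<le> B\<^sup>2 * (\<Sum>n\<in>F. (cmod (v n))\<^sup>2)"
    by (simp add: sum_distrib_left)
qed

lemma positive_op_diag_op:
  assumes "\<And>n. 0 \<le> f n"
  shows "positive_op (diag_op f)"
  unfolding positive_op_def
proof (intro allI impI)
  fix F :: "nat set" and v :: "nat \<Rightarrow> complex"
  assume F: "finite F"
  have "(\<Sum>m\<in>F. \<Sum>n\<in>F. cnj (v m) * diag_op f m n * v n) = complex_of_real (\<Sum>m\<in>F. f m * (cmod (v m))\<^sup>2)"
  proof -
    have "(\<Sum>n\<in>F. cnj (v m) * diag_op f m n * v n) = complex_of_real (f m * (cmod (v m))\<^sup>2)"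
      if "m \<in> F" for m
    proof -
      have "(\<Sum>n\<in>F. cnj (v m) * diag_op f m n * v n)
          = (\<Sum>n\<in>F. if n = m then complex_of_real (f m) * (v m * cnj (v m)) else 0)"
        by (intro sum.cong) (auto simp: diag_op_def)
      then have "(\<Sum>n\<in>F. cnj (v m) * diag_op f m n * v n) = complex_of_real (f m) * (v m * cnj (v m))"
        using F that by simp
      then show ?thesis by (simp only: complex_mult_cnj of_real_mult cmod_power2)
    qed
    then show ?thesis by simp
  qed
  then show "Im (\<Sum>m\<in>F. \<Sum>n\<in>F. cnj (v m) * diag_op f m n * v n) = 0 \<and>
      0 \<le> Re (\<Sum>m\<in>F. \<Sum>n\<in>F. cnj (v m) * diag_op f m n * v n)"
    using assms by (simp add: sum_nonneg)
qed

lemma density_op_diag_op: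
  assumes nonneg: "\<And>n. 0 \<le> r n" and sum: "r sums 1"
  shows "density_op (diag_op r)"
  unfolding density_op_def
proof (intro conjI)
  have "r n \<le> 1" for n
    using sum_le_suminf[of r "{n}"] nonneg sum by (simp add: sums_iff)
  then show "bounded_op (diag_op r)"
    using nonneg by (intro bounded_op_diag_op[of _ 1]) (simp add: abs_le_iff)
  show "positive_op (diag_op r)" using nonneg by (rule positive_op_diag_op)
  show "summable (\<lambda>n. Re (diag_op r n n))" using sum by (simp add: diag_op_def sums_iff)
  show "op_trace (diag_op r) = 1" using sum by (simp add: op_trace_diag_op sums_iff)
qed

subsection \<open>Positive operators and the square root\<close>

definition quad_form :: "fop \<Rightarrow> nat set \<Rightarrow> (nat \<Rightarrow> complex) \<Rightarrow> complex" where
  "quad_form S F v = (\<Sum>m\<in>F. \<Sum>n\<in>F. cnj (v m) * S m n * v n)"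

lemma quad_form_nonneg:
  "positive_op S \<Longrightarrow> finite F \<Longrightarrow> Im (quad_form S F v) = 0 \<and> 0 \<le> Re (quad_form S F v)"
  unfolding positive_op_def quad_form_def by blast

lemma quad_form_two_point:
  "m \<noteq> n \<Longrightarrow> quad_form S {m, n} (\<lambda>k. if k = m then 1 else c) =
     S m m + S m n * c + cnj c * S n m + cnj c * S n n * c"
  by (simp add: quad_form_def)

lemma positive_op_diag_entry:
  assumes "positive_op S"
  shows "S m m = complex_of_real (Re (S m m))" and "0 \<le> Re (S m m)"
  using quad_form_nonneg[OF assms, of "{m}" "\<lambda>_. 1"]
  by (simp_all add: quad_form_def complex_eq_iff)

lemma positive_op_hermitian:
  assumes "positive_op S"
  shows "S m n = cnj (S n m)"
proof (cases "m = n")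
  case True
  then show ?thesis using positive_op_diag_entry(1)[OF assms, of m] by (metis complex_cnj_complex_of_real)
next
  case False
  have real_diag: "Im (S m m) = 0" "Im (S n n) = 0"
    using positive_op_diag_entry(1)[OF assms] by (metis Im_complex_of_real)+
  have "Im (quad_form S {m, n} (\<lambda>k. if k = m then 1 else 1)) = 0"
    using quad_form_nonneg[OF assms] by simp
  then have "Im (S m n) + Im (S n m) = 0"
    using quad_form_two_point[OF False, of S 1] real_diag by simp
  moreover have "Im (quad_form S {m, n} (\<lambda>k. if k = m then 1 else \<i>)) = 0"
    using quad_form_nonneg[OF assms] by simp
  then have "Re (S m n) - Re (S n m) = 0"
    using quad_form_two_point[OF False, of S \<i>] real_diag by simp
  ultimately show ?thesis by (simp add: complex_eq_iff)
qed

lemma bounded_op_column_summable: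
  assumes "bounded_op S"
  shows "summable (\<lambda>k. (cmod (S k n))\<^sup>2)"
proof -
  obtain C where C: "\<And>F M (v::nat \<Rightarrow> complex). finite F \<Longrightarrow> finite M \<Longrightarrow>
      (\<Sum>m\<in>M. (cmod (\<Sum>n\<in>F. S m n * v n))\<^sup>2) \<le> C * (\<Sum>n\<in>F. (cmod (v n))\<^sup>2)"
    using assms unfolding bounded_op_def by blast
  show ?thesis
  proof (rule summableI_nonneg_bounded)
    show "(\<Sum>k<N. (cmod (S k n))\<^sup>2) \<le> C" for N
      using C[of "{n}" "{..<N}" "\<lambda>_. 1"] by simp
  qed simp
qed

lemma positive_op_mmult_self_diag:
  assumes "bounded_op S" and "positive_op S"
  shows "summable (\<lambda>k. (cmod (S n k))\<^sup>2)"
    and "mmult S S n n = complex_of_real (\<Sum>k. (cmod (S n k))\<^sup>2)"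
proof -
  have "(cmod (S n k))\<^sup>2 = (cmod (S k n))\<^sup>2" for k
    using positive_op_hermitian[OF assms(2), of n k] by simp
  then show row: "summable (\<lambda>k. (cmod (S n k))\<^sup>2)"
    using bounded_op_column_summable[OF assms(1), of n] by simp
  have "S n k * S k n = complex_of_real ((cmod (S n k))\<^sup>2)" for k
    using positive_op_hermitian[OF assms(2), of k n] by (simp add: complex_mult_cnj cmod_power2)
  then show "mmult S S n n = complex_of_real (\<Sum>k. (cmod (S n k))\<^sup>2)"
    unfolding mmult_def using row by (simp add: suminf_of_real)
qed

text \<open>Since \<open>op_sqrt\<close> is a definite description, evaluating a trace norm requires uniqueness of
  the positive square root; for diagonal operators with two-point support it is proved by hand.\<close>

context
  fixes S :: fop and d :: "nat \<Rightarrow> real" and i j :: nat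
  assumes bounded: "bounded_op S" and positive: "positive_op S"
    and square: "mmult S S = diag_op d"
    and distinct: "i \<noteq> j" and support: "\<And>n. n \<noteq> i \<Longrightarrow> n \<noteq> j \<Longrightarrow> d n = 0"
begin

lemma square_diag_eq_row_norm: "d n = (\<Sum>k. (cmod (S n k))\<^sup>2)"
  using positive_op_mmult_self_diag(2)[OF bounded positive, of n] square
  by (simp add: diag_op_def)

lemma square_root_entry_outside_support:
  assumes "n \<noteq> i" "n \<noteq> j"
  shows "S n k = 0" and "S k n = 0"
proof -
  have "(\<Sum>k. (cmod (S n k))\<^sup>2) = 0"
    using square_diag_eq_row_norm[of n] support[OF assms] by simp
  then show row: "S n k = 0"
    using suminf_eq_zero_iff[OF positive_op_mmult_self_diag(1)[OF bounded positive]] by simp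
  show "S k n = 0"
    using row positive_op_hermitian[OF positive, of k n] by simp
qed

lemma square_root_off_diagonal: "S i j = 0"
proof (rule ccontr)
  assume nonzero: "S i j \<noteq> 0"
  have "mmult S S i j = S i i * S i j + S i j * S j j"
    unfolding mmult_def
    by (rule suminf_two_point[OF distinct]) (simp add: square_root_entry_outside_support)
  then have "S i j * (S i i + S j j) = 0"
    using square distinct by (simp add: diag_op_def algebra_simps)
  then have "Re (S i i) + Re (S j j) = 0"
    using nonzero by (metis mult_eq_0_iff plus_complex.sel(1) zero_complex.sel(1))
  then have diag_zero: "S i i = 0" "S j j = 0"
    using positive_op_diag_entry[OF positive, of i] positive_op_diag_entry[OF positive, of j]
    by (metis add_nonneg_eq_0_iff of_real_0)+
  \<comment> \<open>The test vector \<open>e\<^sub>i - S\<^sub>j\<^sub>i e\<^sub>j\<close> gives a negative value of the quadratic form.\<close>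
  define c where "c = - cnj (S i j)"
  have "quad_form S {i, j} (\<lambda>k. if k = i then 1 else c) = S i j * c + cnj c * S j i"
    using quad_form_two_point[OF distinct, of S c] diag_zero by simp
  also have "\<dots> = - 2 * complex_of_real ((cmod (S i j))\<^sup>2)"
    using positive_op_hermitian[OF positive, of j i] unfolding c_def
    by (simp add: complex_mult_cnj cmod_power2 algebra_simps)
  finally have "Re (quad_form S {i, j} (\<lambda>k. if k = i then 1 else c)) < 0"
    using nonzero by simp
  then show False using quad_form_nonneg[OF positive] by (meson finite.emptyI finite_insert not_le)
qed

lemma square_root_off_diagonal_entry: "m \<noteq> n \<Longrightarrow> S m n = 0"
  using square_root_off_diagonal positive_op_hermitian[OF positive, of j i]
    square_root_entry_outside_support by (cases "m = i \<or> m = j"; cases "n = i \<or> n = j") auto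

lemma square_root_eq_diag_op: "S = diag_op (\<lambda>n. sqrt (d n))"
proof (intro ext)
  fix m n
  have "S n n = complex_of_real (sqrt (d n))"
  proof -
    have "(\<lambda>k. (cmod (S n k))\<^sup>2) = (\<lambda>k. if k = n then (cmod (S n n))\<^sup>2 else 0)"
      using square_root_off_diagonal_entry[of n] by auto
    then have "d n = (cmod (S n n))\<^sup>2"
      using square_diag_eq_row_norm[of n] suminf_single[of n "(cmod (S n n))\<^sup>2"] by simp
    moreover have "cmod (S n n) = Re (S n n)"
      using positive_op_diag_entry[OF positive, of n] by (metis abs_of_nonneg norm_of_real)
    ultimately show ?thesis
      using positive_op_diag_entry[OF positive, of n] by (simp add: real_sqrt_unique)
  qed
  then show "S m n = diag_op (\<lambda>n. sqrt (d n)) m n"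
    using square_root_off_diagonal_entry[of m n] by (simp add: diag_op_def)
qed

end

lemma op_sqrt_diag_op_two_point:
  assumes "i \<noteq> j" and "\<And>n. 0 \<le> d n" and "\<And>n. n \<noteq> i \<Longrightarrow> n \<noteq> j \<Longrightarrow> d n = 0"
  shows "op_sqrt (diag_op d) = diag_op (\<lambda>n. sqrt (d n))"
  unfolding op_sqrt_def
proof (rule the_equality)
  have "\<bar>sqrt (d n)\<bar> \<le> sqrt (d i) + sqrt (d j)" for n
    using assms by (cases "n = i"; cases "n = j") auto
  then have "bounded_op (diag_op (\<lambda>n. sqrt (d n)))" by (rule bounded_op_diag_op)
  then show "bounded_op (diag_op (\<lambda>n. sqrt (d n))) \<and> positive_op (diag_op (\<lambda>n. sqrt (d n))) \<and>
      mmult (diag_op (\<lambda>n. sqrt (d n))) (diag_op (\<lambda>n. sqrt (d n))) = diag_op d"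
    using assms(2) by (simp add: positive_op_diag_op mmult_diag_op)
next
  fix S
  assume "bounded_op S \<and> positive_op S \<and> mmult S S = diag_op d"
  then show "S = diag_op (\<lambda>n. sqrt (d n))"
    using square_root_eq_diag_op[of S d i j] assms(1,3) by blast
qed

lemma trace_norm_diag_op_two_point:
  assumes "i \<noteq> j" and "\<And>n. n \<noteq> i \<Longrightarrow> n \<noteq> j \<Longrightarrow> f n = 0"
  shows "trace_norm (diag_op f) = ennreal (\<bar>f i\<bar> + \<bar>f j\<bar>)"
proof -
  have "op_sqrt (mmult (adj (diag_op f)) (diag_op f)) = diag_op (\<lambda>n. \<bar>f n\<bar>)"
    using op_sqrt_diag_op_two_point[of i j "\<lambda>n. f n * f n"] assms
    by (simp add: adj_diag_op mmult_diag_op)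
  then have "trace_norm (diag_op f) = (\<Sum>n. ennreal \<bar>f n\<bar>)"
    by (simp add: trace_norm_def diag_op_def)
  also have "\<dots> = ennreal \<bar>f i\<bar> + ennreal \<bar>f j\<bar>"
    by (rule suminf_two_point[OF assms(1)]) (simp add: assms(2))
  also have "\<dots> = ennreal (\<bar>f i\<bar> + \<bar>f j\<bar>)"
    by simp
  finally show ?thesis .
qed

subsection \<open>Photon subtraction of diagonal states\<close>

lemma ann_diag_op_cre: "mmult (mmult ann (diag_op r)) cre = diag_op (\<lambda>n. real (Suc n) * r (Suc n))"
  unfolding mmult_diag_op_right mmult_cre_right
  by (auto simp: fun_eq_iff ann_def diag_op_def simp flip: of_real_mult)

lemma photon_sub_diag_op:
  "photon_sub (diag_op r) = op_normalize (diag_op (\<lambda>n. real (Suc n) * r (Suc n)))"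
  by (simp add: photon_sub_def op_normalize_def ann_diag_op_cre)

lemma approx_sub_diag_op:
  "approx_sub g (diag_op r) =
     diag_op (\<lambda>n. (exp (2 * g) - 1) * (exp (- 2 * g * real (Suc n)) * (real (Suc n) * r (Suc n))))"
proof -
  have filtered: "mmult (mmult (mmult ann (exp_mH g)) (diag_op r)) (exp_mH g)
      = mmult ann (diag_op (\<lambda>n. exp (- 2 * g * real n) * r n))"
    unfolding exp_mH_eq_diag_op mmult_diag_op_right
    by (auto simp: fun_eq_iff mult_exp_exp simp flip: of_real_mult)
  show ?thesis
    unfolding approx_sub_def filtered ann_diag_op_cre op_scale_diag_op by (simp add: mult.left_commute)
qed

definition two_point_weights :: "nat \<Rightarrow> nat \<Rightarrow> real \<Rightarrow> real \<Rightarrow> nat \<Rightarrow> real" where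
  "two_point_weights i j a b n = (if n = i then a else if n = j then b else 0)"

context
  fixes i j :: nat
  assumes distinct: "i \<noteq> j"
begin

lemma op_normalize_two_point_weights:
  "op_normalize (diag_op (two_point_weights i j a b))
     = diag_op (two_point_weights i j (a / (a + b)) (b / (a + b)))"
proof -
  have "summable (two_point_weights i j a b)"
    by (rule summable_finite[of "{i, j}"]) (simp_all add: two_point_weights_def)
  moreover have "(\<Sum>n. two_point_weights i j a b n) = a + b"
    using suminf_two_point[OF distinct, of "two_point_weights i j a b"] distinct
    by (simp add: two_point_weights_def)
  ultimately show ?thesis
    by (simp add: op_normalize_diag_op)
      (rule arg_cong[where f = diag_op], auto simp: fun_eq_iff two_point_weights_def)
qed

lemma trace_norm_diff_two_point_weights:
  "trace_norm (op_diff (diag_op (two_point_weights i j a b)) (diag_op (two_point_weights i j c d)))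
     = ennreal (\<bar>a - c\<bar> + \<bar>b - d\<bar>)"
  unfolding op_diff_diag_op using distinct
  by (subst trace_norm_diag_op_two_point[OF distinct]) (simp_all add: two_point_weights_def)

end

subsection \<open>The witness state\<close>

definition probe_weights :: "nat \<Rightarrow> real \<Rightarrow> nat \<Rightarrow> real" where
  "probe_weights M p n =
     (if n = 1 then p else if n = Suc M then 3 * p / real (Suc M)
      else if n = 0 then 1 - p - 3 * p / real (Suc M) else 0)"

context
  fixes M :: nat and p :: real
  assumes M: "M \<noteq> 0"
begin

lemma probe_weights_support: "n \<notin> {0, 1, Suc M} \<Longrightarrow> probe_weights M p n = 0"
  by (simp add: probe_weights_def)

lemma probe_weights_sums: "probe_weights M p sums 1"
proof -
  have "probe_weights M p sums (\<Sum>n\<in>{0, 1, Suc M}. probe_weights M p n)"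
    by (rule sums_finite) (simp_all add: probe_weights_support)
  then show ?thesis using M by (simp add: probe_weights_def)
qed

lemma probe_weights_nonneg: "0 \<le> p \<Longrightarrow> 4 * p \<le> 1 \<Longrightarrow> 0 \<le> probe_weights M p n"
proof -
  assume "0 \<le> p" "4 * p \<le> 1"
  moreover have "3 * p * 1 \<le> 3 * p * real (Suc M)"
    using \<open>0 \<le> p\<close> by (intro mult_left_mono) simp_all
  then have "3 * p / real (Suc M) \<le> 3 * p" by (simp add: divide_le_eq)
  ultimately show ?thesis by (simp add: probe_weights_def)
qed

lemma probe_weights_second_moment:
  "(\<lambda>n. real n ^ 2 * probe_weights M p n) sums (p * (3 * real M + 4))"
proof -
  have "(\<lambda>n. real n ^ 2 * probe_weights M p n) sums (\<Sum>n\<in>{0, 1, Suc M}. real n ^ 2 * probe_weights M p n)"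
    by (rule sums_finite) (simp_all add: probe_weights_support)
  moreover have "(\<Sum>n\<in>{0, 1, Suc M}. real n ^ 2 * probe_weights M p n) = p * (3 * real M + 4)"
    using M by (simp add: probe_weights_def power2_eq_square field_simps)
  ultimately show ?thesis by simp
qed

lemma probe_weights_shifted:
  "real (Suc n) * probe_weights M p (Suc n) = two_point_weights 0 M p (3 * p) n"
  using M by (simp add: probe_weights_def two_point_weights_def)

lemma photon_sub_probe_state:
  assumes "0 < p"
  shows "photon_sub (diag_op (probe_weights M p)) = diag_op (two_point_weights 0 M (1 / 4) (3 / 4))"
  unfolding photon_sub_diag_op probe_weights_shifted op_normalize_two_point_weights[OF M[symmetric]]
  using assms by simp

lemma approx_sub_probe_state:
  assumes "0 < p" and "0 < g"
  shows "op_normalize (approx_sub g (diag_op (probe_weights M p)))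
    = diag_op (two_point_weights 0 M (1 / (1 + 3 * exp (- 2 * g * real M)))
                                     (1 - 1 / (1 + 3 * exp (- 2 * g * real M))))"
proof -
  define x where "x = exp (- 2 * g * real M)"
  define K where "K = (exp (2 * g) - 1) * exp (- 2 * g) * p"
  have nonzero: "K \<noteq> 0" "1 + 3 * x \<noteq> 0"
    using assms by (simp_all add: K_def x_def add_pos_pos[THEN less_imp_neq, symmetric])
  have approx: "approx_sub g (diag_op (probe_weights M p)) = diag_op (two_point_weights 0 M K (K * (3 * x)))"
    unfolding approx_sub_diag_op probe_weights_shifted
    by (rule arg_cong[where f = diag_op])
      (auto simp: fun_eq_iff two_point_weights_def K_def x_def mult_exp_exp algebra_simps)
  have denominator: "K + K * (3 * x) = K * (1 + 3 * x)" by (simp add: algebra_simps)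
  have ratio_0: "K / (K * (1 + 3 * x)) = 1 / (1 + 3 * x)"
    using nonzero by simp
  have "K * (3 * x) / (K * (1 + 3 * x)) = 3 * x / (1 + 3 * x)"
    using nonzero by simp
  also have "\<dots> = 1 - 1 / (1 + 3 * x)"
    using nonzero by (simp add: field_simps)
  finally have ratio_M: "K * (3 * x) / (K * (1 + 3 * x)) = 1 - 1 / (1 + 3 * x)" .
  have "op_normalize (approx_sub g (diag_op (probe_weights M p)))
      = diag_op (two_point_weights 0 M (K / (K + K * (3 * x))) (K * (3 * x) / (K + K * (3 * x))))"
    unfolding approx by (rule op_normalize_two_point_weights[OF M[symmetric]])
  also have "\<dots> = diag_op (two_point_weights 0 M (1 / (1 + 3 * x)) (1 - 1 / (1 + 3 * x)))"
    by (simp only: denominator ratio_0 ratio_M)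
  finally show ?thesis unfolding x_def .
qed

end

lemma probe_state_distance:
  assumes M: "M \<noteq> 0" and "0 < p" and "0 < g" and filter: "9 * exp (- 2 * g * real M) \<le> 1"
  defines "\<rho> \<equiv> diag_op (probe_weights M p)"
  shows "1 \<le> trace_norm (op_diff (photon_sub \<rho>) (op_normalize (approx_sub g \<rho>)))"
proof -
  define y where "y = 1 / (1 + 3 * exp (- 2 * g * real M))"
  have "0 < 1 + 3 * exp (- 2 * g * real M)"
    by (simp add: add_pos_pos)
  then have "3 / 4 \<le> y"
    using filter by (simp add: y_def le_divide_eq)
  then have "1 \<le> \<bar>1 / 4 - y\<bar> + \<bar>3 / 4 - (1 - y)\<bar>"
    by (simp add: abs_if)
  then show ?thesis
    unfolding \<rho>_def photon_sub_probe_state[OF M \<open>0 < p\<close>] approx_sub_probe_state[OF M \<open>0 < p\<close> \<open>0 < g\<close>]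
      trace_norm_diff_two_point_weights[OF M[symmetric]] y_def[symmetric]
    using ennreal_leI by fastforce
qed

lemma ex_nat_exp_decay_below:
  fixes a c :: real
  assumes "0 < a"
  shows "\<exists>M. M \<noteq> 0 \<and> c * exp (- a * real M) \<le> 1"
proof -
  obtain n :: nat where n: "ln \<bar>c\<bar> / a < real n" using reals_Archimedean2 by blast
  have "\<bar>c\<bar> * exp (- a * real (Suc n)) \<le> 1"
  proof (cases "c = 0")
    case False
    have "ln \<bar>c\<bar> \<le> a * real (Suc n)" using n assms by (simp add: divide_less_eq algebra_simps)
    then have "exp (- a * real (Suc n)) \<le> exp (- ln \<bar>c\<bar>)" by simp
    then show ?thesis using False by (simp add: exp_minus field_simps)
  qed simp
  moreover have "c * exp (- a * real (Suc n)) \<le> \<bar>c\<bar> * exp (- a * real (Suc n))"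
    by (intro mult_right_mono) simp_all
  ultimately show ?thesis by (metis Zero_not_Suc order.trans)
qed

theorem proposition4:
  fixes \<gamma> E :: real
  assumes "\<gamma> > 0" and "E > 0"
  shows "\<exists>\<rho>. density_op \<rho> \<and> summable (\<lambda>n. real n ^ 2 * Re (\<rho> n n)) \<and>
           0 < tr_H_pow \<rho> 2 \<and> tr_H_pow \<rho> 2 \<le> E \<and>
           trace_norm (op_diff (photon_sub \<rho>)
              (op_scale (1 / op_trace (approx_sub \<gamma> \<rho>)) (approx_sub \<gamma> \<rho>))) \<ge> 1"
proof -
  obtain M where M: "M \<noteq> 0" and filter: "9 * exp (- 2 * \<gamma> * real M) \<le> 1"
    using ex_nat_exp_decay_below[of "2 * \<gamma>" 9] assms(1) by auto
  define p where "p = min E 1 / (3 * real M + 4)"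
  have "0 < p" "4 * p \<le> 1" and energy: "p * (3 * real M + 4) = min E 1"
    using assms(2) by (simp_all add: p_def field_simps)
  define \<rho> where "\<rho> = diag_op (probe_weights M p)"
  have "density_op \<rho>"
    unfolding \<rho>_def using probe_weights_nonneg[OF M] probe_weights_sums[OF M] \<open>0 < p\<close> \<open>4 * p \<le> 1\<close>
    by (intro density_op_diag_op) auto
  moreover have "(\<lambda>n. real n ^ 2 * Re (\<rho> n n)) sums min E 1"
    using probe_weights_second_moment[OF M, of p] by (simp add: \<rho>_def diag_op_def energy)
  then have "summable (\<lambda>n. real n ^ 2 * Re (\<rho> n n))" and "tr_H_pow \<rho> 2 = min E 1"
    by (simp_all add: tr_H_pow_def sums_iff)
  moreover have "1 \<le> trace_norm (op_diff (photon_sub \<rho>) (op_normalize (approx_sub \<gamma> \<rho>)))"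
    unfolding \<rho>_def by (rule probe_state_distance[OF M \<open>0 < p\<close> assms(1) filter])
  ultimately show ?thesis
    using assms(2) unfolding op_normalize_def by (intro exI[of _ \<rho>]) simp
qed

end
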